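(* Let $V$ be a filled sparsity pattern, $X\in\mathbb S^n_V$ positive definite and $Y\in\mathbb S^n_V$. Let $X+tY=L(t)D(t)L(t)^T$ ($L(t)$ unit lower triangular, $D(t)$ positive diagonal) for $t$ near $0$, $L=L(0)$, $D=D(0)$, and $L',D'$ the derivatives at $t=0$. Let $S=\mathcal P(X^{-1})$ and $T=\mathcal P(X^{-1}YX^{-1})$ (so $T=-\frac{d}{dt}\mathcal P((X+tY)^{-1})|_{t=0}$). Then for every $j$, $$\begin{bmatrix}1&L_{I_j j}^T\\0&I\end{bmatrix}\begin{bmatrix}T_{jj}&T_{I_j j}^T\\ T_{I_j j}&T_{I_jI_j}\end{bmatrix}\begin{bmatrix}1&0\\ L_{I_j j}&I\end{bmatrix}=\begin{bmatrix}D'_{jj}/D_{jj}^2&(S_{I_jI_j}L'_{I_j j})^T\\ S_{I_jI_j}L'_{I_j j}&T_{I_jI_j}\end{bmatrix}.$$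
   Context: A symmetric sparsity pattern $V$ is a set of pairs $(i,j)$ with $1\le j\le i\le n$ containing all $(i,i)$; it is filled (chordal) if $i>j>k$, $(i,k)\in V$, $(j,k)\in V$ imply $(i,j)\in V$. $\mathbb S^n_V$ is the set of real symmetric $n\times n$ matrices with $X_{ij}=X_{ji}=0$ whenever $i\ge j$ and $(i,j)\notin V$. $\mathcal P$ is the projection onto $\mathbb S^n_V$: $\mathcal P(A)_{ij}=A_{ij}$ if $(\max(i,j),\min(i,j))\in V$ and $0$ otherwise. For each $j$, $I_j=\{i>j:(i,j)\in V\}$ (sorted increasingly). $A_{IJ}$ is the submatrix with rows $I$ and columns $J$; $A_{Ij}$ the part of column $j$ with rows in $I$. *)

theory Defs
  imports Complex_Main "Jordan_Normal_Form.Gauss_Jordan_Elimination" "Jordan_Normal_Form.DL_Submatrix"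
begin

text \<open>Indices are 0-based: rows/columns range over 0..n-1. A symmetric sparsity
  pattern is a set of pairs (i,j) with j \<le> i < n containing every (i,i).\<close>

definition sparsity_pattern :: "nat \<Rightarrow> (nat \<times> nat) set \<Rightarrow> bool" where
  "sparsity_pattern n V \<longleftrightarrow> V \<subseteq> {(i,j). j \<le> i \<and> i < n} \<and> (\<forall>i<n. (i,i) \<in> V)"

definition filled_pattern :: "(nat \<times> nat) set \<Rightarrow> bool" where
  "filled_pattern V \<longleftrightarrow> (\<forall>i j k. i > j \<and> j > k \<and> (i,k) \<in> V \<and> (j,k) \<in> V \<longrightarrow> (i,j) \<in> V)"

definition in_SV :: "nat \<Rightarrow> (nat \<times> nat) set \<Rightarrow> real mat \<Rightarrow> bool" where
  "in_SV n V X \<longleftrightarrow> X \<in> carrier_mat n n \<and> transpose_mat X = X \<and>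
     (\<forall>i<n. \<forall>j<n. (max i j, min i j) \<notin> V \<longrightarrow> X $$ (i,j) = 0)"

definition projP :: "(nat \<times> nat) set \<Rightarrow> real mat \<Rightarrow> real mat" where
  "projP V A = mat (dim_row A) (dim_col A)
     (\<lambda>(i,j). if (max i j, min i j) \<in> V then A $$ (i,j) else 0)"

definition Iset :: "(nat \<times> nat) set \<Rightarrow> nat \<Rightarrow> nat set" where
  "Iset V j = {i. i > j \<and> (i,j) \<in> V}"

definition pos_def_mat :: "nat \<Rightarrow> real mat \<Rightarrow> bool" where
  "pos_def_mat n X \<longleftrightarrow> X \<in> carrier_mat n n \<and> transpose_mat X = X \<and>
     (\<forall>v \<in> carrier_vec n. v \<noteq> 0\<^sub>v n \<longrightarrow> v \<bullet> (X *\<^sub>v v) > 0)"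

definition unit_lower_triangular :: "nat \<Rightarrow> real mat \<Rightarrow> bool" where
  "unit_lower_triangular n L \<longleftrightarrow> L \<in> carrier_mat n n \<and> (\<forall>i<n. L $$ (i,i) = 1) \<and>
     (\<forall>i<n. \<forall>j<n. i < j \<longrightarrow> L $$ (i,j) = 0)"

definition pos_diagonal :: "nat \<Rightarrow> real mat \<Rightarrow> bool" where
  "pos_diagonal n D \<longleftrightarrow> D \<in> carrier_mat n n \<and> diagonal_mat D \<and> (\<forall>i<n. D $$ (i,i) > 0)"

definition mat_inv :: "real mat \<Rightarrow> real mat" where
  "mat_inv A = the (mat_inverse A)"

end

theory Submission
  imports Defs "Jordan_Normal_Form.Determinant"
begin

text \<open>
  Proof idea.  Write X(t) = X + tY = L(t) D(t) L(t)^T, Z(t) = X(t)^-1, and W = X^-1 Y X^-1.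

  (1) Since V is filled, the factor L(t) has no fill-in: column j of L(t), and hence of
      L' = L'(0), is supported on K = {j} \<union> I_j, and K x K lies inside the pattern.
  (2) From Z(t) L(t) D(t) L(t)^T = 1 and triangularity, (Z(t) L(t))_ij = delta_ij / D(t)_jj
      for i >= j.
  (3) Along the line, Z(t) is differentiable at 0 with derivative -W.  Differentiating (2)
      gives (W L)_ij = (X^-1 L')_ij + delta_ij D'_jj / D_jj^2 for i >= j, and (2) at t = 0
      gives (X^-1 L)_ij = 0 for i in I_j.
  (4) By (1) these relations only involve entries of X^-1 and W on K x K, i.e. entries of
      S = P(X^-1) and T = P(W); read blockwise they are the claimed congruence identity.
\<close>

lemma sum_eq_single_term:
  assumes "finite S" "k \<in> S" "\<And>a. a \<in> S \<Longrightarrow> a \<noteq> k \<Longrightarrow> f a = 0"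
  shows "sum f S = f k"
proof -
  have "sum f S = f k + sum f (S - {k})" using assms by (simp add: sum.remove)
  also have "sum f (S - {k}) = 0" using assms by (intro sum.neutral) auto
  finally show ?thesis by simp
qed

lemma mat_mult_entry:
  assumes "A \<in> carrier_mat r m" "B \<in> carrier_mat m c" "i < r" "k < c"
  shows "(A * B) $$ (i,k) = (\<Sum>a<m. A $$ (i,a) * B $$ (a,k))"
  using assms by (simp add: scalar_prod_def atLeast0LessThan)

lemma mult_diag_mult_entry:
  assumes L: "L \<in> carrier_mat n n" and D: "D \<in> carrier_mat n n" and M: "M \<in> carrier_mat n n"
    and dD: "diagonal_mat D" and i: "i < n" and k: "k < n"
  shows "(L * D * M) $$ (i,k) = (\<Sum>a<n. L $$ (i,a) * D $$ (a,a) * M $$ (a,k))"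
proof -
  have LD: "(L * D) $$ (i,a) = L $$ (i,a) * D $$ (a,a)" if a: "a < n" for a
  proof -
    have "(L * D) $$ (i,a) = (\<Sum>b<n. L $$ (i,b) * D $$ (b,a))" using mat_mult_entry[OF L D i a] .
    also have "\<dots> = L $$ (i,a) * D $$ (a,a)"
      using dD D a by (intro sum_eq_single_term) (auto simp: diagonal_mat_def)
    finally show ?thesis .
  qed
  have "(L * D * M) $$ (i,k) = (\<Sum>a<n. (L * D) $$ (i,a) * M $$ (a,k))"
    using L D M i k by (intro mat_mult_entry) auto
  also have "\<dots> = (\<Sum>a<n. L $$ (i,a) * D $$ (a,a) * M $$ (a,k))"
    using LD by (intro sum.cong) auto
  finally show ?thesis .
qed

lemma ldl_entry:
  assumes L: "L \<in> carrier_mat n n" and D: "D \<in> carrier_mat n n" and dD: "diagonal_mat D"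
    and i: "i < n" and k: "k < n"
  shows "(L * D * transpose_mat L) $$ (i,k) = (\<Sum>m<n. L $$ (i,m) * D $$ (m,m) * L $$ (k,m))"
proof -
  have "(L * D * transpose_mat L) $$ (i,k)
      = (\<Sum>m<n. L $$ (i,m) * D $$ (m,m) * transpose_mat L $$ (m,k))"
    using L by (intro mult_diag_mult_entry[OF L D _ dD i k]) simp
  also have "\<dots> = (\<Sum>m<n. L $$ (i,m) * D $$ (m,m) * L $$ (k,m))"
    using L k by (intro sum.cong) auto
  finally show ?thesis .
qed

lemma symmetric_entry:
  assumes "transpose_mat A = A" "A \<in> carrier_mat n n" "i < n" "k < n"
  shows "A $$ (k,i) = A $$ (i,k)"
proof -
  have "transpose_mat A $$ (i,k) = A $$ (k,i)" using assms(2-4) by simp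
  then show ?thesis using assms(1) by simp
qed

lemma affine_at_zero:
  fixes X Y :: "'a::comm_ring_1 mat"
  assumes "X \<in> carrier_mat n n" "Y \<in> carrier_mat n n"
  shows "X + 0 \<cdot>\<^sub>m Y = X"
  using assms by (intro eq_matI) auto

text \<open>The inverse given by the adjugate formula; it is continuous in the entries, which makes it
  the convenient representative of the inverse along the line X + tY.\<close>

definition adj_inv :: "'a::field mat \<Rightarrow> 'a mat" where
  "adj_inv A = (1 / det A) \<cdot>\<^sub>m adj_mat A"

lemma adj_inv_carrier: "A \<in> carrier_mat n n \<Longrightarrow> adj_inv A \<in> carrier_mat n n"
  unfolding adj_inv_def by (rule smult_carrier_mat[OF adj_mat(1)])

lemma adj_inv_inverse:
  assumes A: "A \<in> carrier_mat n n" and dA: "det A \<noteq> 0"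
  shows "adj_inv A * A = 1\<^sub>m n" "A * adj_inv A = 1\<^sub>m n"
proof -
  show "adj_inv A * A = 1\<^sub>m n"
    unfolding adj_inv_def mult_smult_assoc_mat[OF adj_mat(1)[OF A] A] adj_mat(3)[OF A]
    using dA by (intro eq_matI) auto
  show "A * adj_inv A = 1\<^sub>m n"
    unfolding adj_inv_def mult_smult_distrib[OF A adj_mat(1)[OF A]] adj_mat(2)[OF A]
    using dA by (intro eq_matI) auto
qed

lemma mat_inv_eq_adj_inv:
  assumes A: "A \<in> carrier_mat n n" and dA: "det A \<noteq> 0"
  shows "mat_inv A = adj_inv A"
proof -
  have "A \<in> Units (ring_mat TYPE(real) n ())" by (rule det_non_zero_imp_unit[OF A dA])
  then obtain B where B: "mat_inverse A = Some B"
    using mat_inverse(1)[OF A, of "()"] by (cases "mat_inverse A") auto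
  then have BA: "B * A = 1\<^sub>m n" and Bc: "B \<in> carrier_mat n n" using mat_inverse(2)[OF A] by auto
  have Zc: "adj_inv A \<in> carrier_mat n n" using adj_inv_carrier[OF A] .
  have "B = B * (A * adj_inv A)" using adj_inv_inverse(2)[OF A dA] Bc by simp
  also have "\<dots> = (B * A) * adj_inv A" using Bc A Zc by simp
  also have "\<dots> = adj_inv A" using BA Zc by simp
  finally show ?thesis unfolding mat_inv_def B by simp
qed

lemma adj_inv_symmetric:
  assumes A: "A \<in> carrier_mat n n" and dA: "det A \<noteq> 0" and sym: "transpose_mat A = A"
  shows "transpose_mat (adj_inv A) = adj_inv A"
proof -
  have Zc: "adj_inv A \<in> carrier_mat n n" using adj_inv_carrier[OF A] .
  have ZtA: "transpose_mat (adj_inv A) * A = 1\<^sub>m n"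
    using transpose_mult[OF A Zc] adj_inv_inverse(2)[OF A dA] sym by simp
  have "transpose_mat (adj_inv A) = transpose_mat (adj_inv A) * (A * adj_inv A)"
    using adj_inv_inverse(2)[OF A dA] Zc by simp
  also have "\<dots> = (transpose_mat (adj_inv A) * A) * adj_inv A" using A Zc by simp
  also have "\<dots> = adj_inv A" using ZtA Zc by simp
  finally show ?thesis .
qed

lemma pos_def_det_nonzero:
  assumes "pos_def_mat n X"
  shows "det X \<noteq> 0"
proof
  have Xc: "X \<in> carrier_mat n n" using assms unfolding pos_def_mat_def by simp
  assume "det X = 0"
  then obtain v where v: "v \<in> carrier_vec n" "v \<noteq> 0\<^sub>v n" "X *\<^sub>v v = 0\<^sub>v n"
    using det_0_iff_vec_prod_zero_field[OF Xc] by blast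
  then have "v \<bullet> (X *\<^sub>v v) > 0" using assms unfolding pos_def_mat_def by blast
  moreover have "v \<bullet> (X *\<^sub>v v) = 0" using v by simp
  ultimately show False by simp
qed

lemma in_SV_affine:
  assumes X: "in_SV n V X" and Y: "in_SV n V Y"
  shows "in_SV n V (X + t \<cdot>\<^sub>m Y)"
proof -
  have XY: "X \<in> carrier_mat n n" "Y \<in> carrier_mat n n"
    "transpose_mat X = X" "transpose_mat Y = Y" using X Y unfolding in_SV_def by auto
  have "transpose_mat (X + t \<cdot>\<^sub>m Y) = X + t \<cdot>\<^sub>m Y"
  proof (rule eq_matI)
    fix i k assume "i < dim_row (X + t \<cdot>\<^sub>m Y)" "k < dim_col (X + t \<cdot>\<^sub>m Y)"
    then have ik: "i < n" "k < n" using XY by auto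
    then show "transpose_mat (X + t \<cdot>\<^sub>m Y) $$ (i,k) = (X + t \<cdot>\<^sub>m Y) $$ (i,k)"
      using XY symmetric_entry[OF XY(3,1) ik] symmetric_entry[OF XY(4,2) ik] by simp
  qed (use XY in auto)
  then show ?thesis using X Y XY unfolding in_SV_def by auto
qed

lemma det_tendsto:
  fixes A :: "'b \<Rightarrow> real mat"
  assumes A: "\<And>t. A t \<in> carrier_mat n n" and A0: "A0 \<in> carrier_mat n n"
    and T: "\<And>i k. i < n \<Longrightarrow> k < n \<Longrightarrow> ((\<lambda>t. A t $$ (i,k)) \<longlongrightarrow> A0 $$ (i,k)) F"
  shows "((\<lambda>t. det (A t)) \<longlongrightarrow> det A0) F"
proof -
  have e: "(\<lambda>t. det (A t)) = (\<lambda>t. \<Sum>p \<in> {p. p permutes {0..<n}}.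
     signof p * (\<Prod>i = 0..<n. A t $$ (i, p i)))" using det_def'[OF A] by auto
  show ?thesis unfolding e det_def'[OF A0]
    by (intro tendsto_sum tendsto_mult tendsto_const tendsto_prod T)
      (auto simp: permutes_in_image)
qed

lemma adj_tendsto:
  fixes A :: "'b \<Rightarrow> real mat"
  assumes A: "\<And>t. A t \<in> carrier_mat n n" and A0: "A0 \<in> carrier_mat n n"
    and T: "\<And>i k. i < n \<Longrightarrow> k < n \<Longrightarrow> ((\<lambda>t. A t $$ (i,k)) \<longlongrightarrow> A0 $$ (i,k)) F"
    and i: "i < n" and k: "k < n"
  shows "((\<lambda>t. adj_mat (A t) $$ (i,k)) \<longlongrightarrow> adj_mat A0 $$ (i,k)) F"
proof -
  have e: "adj_mat B $$ (i,k) = (-1)^(k+i) * det (mat_delete B k i)" if "B \<in> carrier_mat n n" for B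
    using that i k by (simp add: adj_mat_def cofactor_def)
  have md: "mat_delete B k i $$ (a,b) = B $$ (if a < k then a else Suc a, if b < i then b else Suc b)"
    if "B \<in> carrier_mat n n" "a < n - 1" "b < n - 1" for B a b
    using that unfolding mat_delete_def by auto
  have "((\<lambda>t. det (mat_delete (A t) k i)) \<longlongrightarrow> det (mat_delete A0 k i)) F"
  proof (rule det_tendsto[where n="n - 1"])
    fix a b assume ab: "a < n - 1" "b < n - 1"
    show "((\<lambda>t. mat_delete (A t) k i $$ (a,b)) \<longlongrightarrow> mat_delete A0 k i $$ (a,b)) F"
      unfolding md[OF A ab] md[OF A0 ab] using ab by (intro T) auto
  qed (use A A0 mat_delete_carrier in blast)+
  then show ?thesis unfolding e[OF A] e[OF A0] by (rule tendsto_mult_left)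
qed

lemma adj_inv_tendsto:
  fixes A :: "'b \<Rightarrow> real mat"
  assumes A: "\<And>t. A t \<in> carrier_mat n n" and A0: "A0 \<in> carrier_mat n n" and dA0: "det A0 \<noteq> 0"
    and T: "\<And>i k. i < n \<Longrightarrow> k < n \<Longrightarrow> ((\<lambda>t. A t $$ (i,k)) \<longlongrightarrow> A0 $$ (i,k)) F"
    and i: "i < n" and k: "k < n"
  shows "((\<lambda>t. adj_inv (A t) $$ (i,k)) \<longlongrightarrow> adj_inv A0 $$ (i,k)) F"
proof -
  have e: "adj_inv B $$ (i,k) = (1 / det B) * adj_mat B $$ (i,k)" if "B \<in> carrier_mat n n" for B
    using adj_mat(1)[OF that] i k by (simp add: adj_inv_def)
  show ?thesis unfolding e[OF A] e[OF A0]
    by (intro tendsto_mult tendsto_divide tendsto_const det_tendsto[OF A A0 T]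
        adj_tendsto[OF A A0 T i k] dA0)
qed

lemma mult_entry_tendsto:
  fixes A :: "'b \<Rightarrow> real mat"
  assumes A: "\<And>t. A t \<in> carrier_mat n n" and A0: "A0 \<in> carrier_mat n n" and M: "M \<in> carrier_mat n n"
    and T: "\<And>i k. i < n \<Longrightarrow> k < n \<Longrightarrow> ((\<lambda>t. A t $$ (i,k)) \<longlongrightarrow> A0 $$ (i,k)) F"
    and a: "a < n" and b: "b < n"
  shows "((\<lambda>t. (A t * M) $$ (a,b)) \<longlongrightarrow> (A0 * M) $$ (a,b)) F"
  unfolding mat_mult_entry[OF A M a b] mat_mult_entry[OF A0 M a b]
  using a by (intro tendsto_intros T) auto

lemma affine_entry_tendsto:
  assumes "X \<in> carrier_mat n n" "Y \<in> carrier_mat n n" "a < n" "b < n"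
  shows "((\<lambda>t. (X + t \<cdot>\<^sub>m Y) $$ (a,b)) \<longlongrightarrow> X $$ (a,b)) (at (0::real))"
proof -
  have "((\<lambda>t. X $$ (a,b) + t * Y $$ (a,b)) \<longlongrightarrow> X $$ (a,b) + 0 * Y $$ (a,b)) (at 0)"
    by (intro tendsto_intros)
  then show ?thesis using assms by simp
qed

lemma affine_det_eventually_nonzero:
  fixes X Y :: "real mat"
  assumes X: "X \<in> carrier_mat n n" and Y: "Y \<in> carrier_mat n n" and dX: "det X \<noteq> 0"
  shows "eventually (\<lambda>t. det (X + t \<cdot>\<^sub>m Y) \<noteq> 0) (nhds 0)"
proof -
  have "((\<lambda>t. det (X + t \<cdot>\<^sub>m Y)) \<longlongrightarrow> det X) (at 0)"
    by (rule det_tendsto[where A="\<lambda>t. X + t \<cdot>\<^sub>m Y"])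
      (use X Y in \<open>auto intro: affine_entry_tendsto[OF X Y]\<close>)
  then have "eventually (\<lambda>t. det (X + t \<cdot>\<^sub>m Y) \<noteq> 0) (at 0)"
    using dX by (rule tendsto_imp_eventually_ne)
  then show ?thesis using dX affine_at_zero[OF X Y] by (simp add: eventually_nhds_conv_at)
qed

lemma adj_inv_affine_resolvent:
  fixes X Y :: "'a::field mat"
  assumes X: "X \<in> carrier_mat n n" and Y: "Y \<in> carrier_mat n n"
    and dX: "det X \<noteq> 0" and dt: "det (X + t \<cdot>\<^sub>m Y) \<noteq> 0"
  shows "adj_inv (X + t \<cdot>\<^sub>m Y) + t \<cdot>\<^sub>m (adj_inv (X + t \<cdot>\<^sub>m Y) * Y * adj_inv X) = adj_inv X"
proof -
  define Z where "Z = adj_inv (X + t \<cdot>\<^sub>m Y)"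
  define Z0 where "Z0 = adj_inv X"
  have Zc: "Z \<in> carrier_mat n n" and Z0c: "Z0 \<in> carrier_mat n n"
    unfolding Z_def Z0_def using X Y by (auto intro: adj_inv_carrier)
  have ZX: "Z * X \<in> carrier_mat n n" and ZY: "Z * Y \<in> carrier_mat n n" using Zc X Y by auto
  have "Z * (X + t \<cdot>\<^sub>m Y) = 1\<^sub>m n" unfolding Z_def using X Y dt by (intro adj_inv_inverse(1)) auto
  then have "Z * X + t \<cdot>\<^sub>m (Z * Y) = 1\<^sub>m n"
    using mult_add_distrib_mat[OF Zc X smult_carrier_mat[OF Y]] mult_smult_distrib[OF Zc Y] by simp
  then have "(Z * X + t \<cdot>\<^sub>m (Z * Y)) * Z0 = Z0" using Z0c by simp
  moreover have "(Z * X + t \<cdot>\<^sub>m (Z * Y)) * Z0 = Z * X * Z0 + t \<cdot>\<^sub>m (Z * Y * Z0)"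
    using add_mult_distrib_mat[OF ZX smult_carrier_mat[OF ZY] Z0c] mult_smult_assoc_mat[OF ZY Z0c]
    by simp
  moreover have "Z * X * Z0 = Z"
    using assoc_mult_mat[OF Zc X Z0c] adj_inv_inverse(2)[OF X dX] Zc unfolding Z0_def by simp
  ultimately show ?thesis unfolding Z_def Z0_def by simp
qed

text \<open>Derivative of the inverse along the line: d/dt (X + tY)^-1 at t = 0 is -X^-1 Y X^-1.
  The resolvent identity turns the difference quotient into a continuous function of t.\<close>

lemma adj_inv_affine_deriv:
  fixes X Y :: "real mat"
  assumes X: "X \<in> carrier_mat n n" and Y: "Y \<in> carrier_mat n n" and dX: "det X \<noteq> 0"
    and a: "a < n" and b: "b < n"
  shows "((\<lambda>t. adj_inv (X + t \<cdot>\<^sub>m Y) $$ (a,b)) has_real_derivative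
           - (adj_inv X * Y * adj_inv X) $$ (a,b)) (at 0)"
proof -
  define Z where "Z t = adj_inv (X + t \<cdot>\<^sub>m Y)" for t
  define Z0 where "Z0 = adj_inv X"
  have Zc: "Z t \<in> carrier_mat n n" for t unfolding Z_def using X Y by (intro adj_inv_carrier) auto
  have Z0c: "Z0 \<in> carrier_mat n n" unfolding Z0_def using adj_inv_carrier[OF X] .
  have YZ0: "Y * Z0 \<in> carrier_mat n n" using Y Z0c by simp
  have Z_at_0: "Z 0 = Z0" unfolding Z_def Z0_def using affine_at_zero[OF X Y] by simp
  define G where "G t = (Z t * (Y * Z0)) $$ (a,b)" for t
  have G_tend: "(G \<longlongrightarrow> (Z0 * (Y * Z0)) $$ (a,b)) (at 0)"
    unfolding G_def
  proof (rule mult_entry_tendsto[OF Zc Z0c YZ0 _ a b])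
    fix i k assume "i < n" "k < n"
    then show "((\<lambda>t. Z t $$ (i,k)) \<longlongrightarrow> Z0 $$ (i,k)) (at 0)"
      unfolding Z_def Z0_def using X Y dX by (intro adj_inv_tendsto affine_entry_tendsto) auto
  qed
  have G_eq: "Z t $$ (a,b) = Z0 $$ (a,b) - t * G t" if dt: "det (X + t \<cdot>\<^sub>m Y) \<noteq> 0" for t
  proof -
    have "Z t + t \<cdot>\<^sub>m (Z t * Y * Z0) = Z0"
      unfolding Z_def Z0_def by (rule adj_inv_affine_resolvent[OF X Y dX dt])
    moreover have "Z t * Y * Z0 = Z t * (Y * Z0)" using Zc Y Z0c by (rule assoc_mult_mat)
    ultimately have "(Z t + t \<cdot>\<^sub>m (Z t * (Y * Z0))) $$ (a,b) = Z0 $$ (a,b)" by simp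
    then have "Z t $$ (a,b) + t * G t = Z0 $$ (a,b)"
      using carrier_matD[OF Zc[of t]] carrier_matD[OF YZ0] a b unfolding G_def by simp
    then show ?thesis by simp
  qed
  have "((\<lambda>t. (Z t $$ (a,b) - Z 0 $$ (a,b)) / (t - 0)) \<longlongrightarrow> - (Z0 * (Y * Z0)) $$ (a,b)) (at 0)"
  proof (rule Lim_transform_eventually)
    show "((\<lambda>t. - G t) \<longlongrightarrow> - (Z0 * (Y * Z0)) $$ (a,b)) (at 0)"
      using G_tend by (rule tendsto_minus)
    have "eventually (\<lambda>t. det (X + t \<cdot>\<^sub>m Y) \<noteq> 0) (at 0)"
      using affine_det_eventually_nonzero[OF X Y dX] by (simp add: eventually_nhds_conv_at)
    moreover have "eventually (\<lambda>t. t \<noteq> 0) (at (0::real))" by (simp add: eventually_at_filter)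
    ultimately show "eventually (\<lambda>t. - G t = (Z t $$ (a,b) - Z 0 $$ (a,b)) / (t - 0)) (at 0)"
      by eventually_elim (simp add: G_eq Z_at_0)
  qed
  moreover have "Z0 * Y * Z0 = Z0 * (Y * Z0)" using Z0c Y Z0c by (rule assoc_mult_mat)
  ultimately have "((\<lambda>t. Z t $$ (a,b)) has_real_derivative - (Z0 * Y * Z0) $$ (a,b)) (at 0)"
    unfolding has_field_derivative_iff by simp
  then show ?thesis unfolding Z_def Z0_def .
qed

lemma mult_entry_deriv:
  fixes A B :: "real \<Rightarrow> real mat"
  assumes A: "\<And>i k. i < n \<Longrightarrow> k < n \<Longrightarrow> ((\<lambda>t. A t $$ (i,k)) has_real_derivative A' $$ (i,k)) (at 0)"
    and B: "\<And>i k. i < n \<Longrightarrow> k < n \<Longrightarrow> ((\<lambda>t. B t $$ (i,k)) has_real_derivative B' $$ (i,k)) (at 0)"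
    and A0: "A 0 \<in> carrier_mat n n" and B0: "B 0 \<in> carrier_mat n n"
    and A': "A' \<in> carrier_mat n n" and B': "B' \<in> carrier_mat n n"
    and i: "i < n" and j: "j < n"
  shows "((\<lambda>t. \<Sum>k<n. A t $$ (i,k) * B t $$ (k,j)) has_real_derivative
           (A' * B 0 + A 0 * B') $$ (i,j)) (at 0)"
proof -
  have "((\<lambda>t. \<Sum>k<n. A t $$ (i,k) * B t $$ (k,j)) has_real_derivative
          (\<Sum>k<n. A' $$ (i,k) * B 0 $$ (k,j) + B' $$ (k,j) * A 0 $$ (i,k))) (at 0)"
    using i j by (intro DERIV_sum DERIV_mult A B) auto
  moreover have "(\<Sum>k<n. A' $$ (i,k) * B 0 $$ (k,j) + B' $$ (k,j) * A 0 $$ (i,k))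
      = (A' * B 0 + A 0 * B') $$ (i,j)"
    using A0 B0 A' B' i j
    by (simp add: mat_mult_entry[OF A' B0 i j] mat_mult_entry[OF A0 B' i j] sum.distrib mult.commute)
  ultimately show ?thesis by simp
qed

text \<open>No fill-in: if A = L D L^T vanishes below the diagonal outside a filled pattern V, then so
  does the factor L.  Induction on the column index; filledness closes the triangle (i,k),(j,k).\<close>

lemma ldl_no_fill:
  assumes filled: "filled_pattern V"
    and L: "unit_lower_triangular n L" and D: "pos_diagonal n D"
    and A: "A = L * D * transpose_mat L"
    and Az: "\<And>i k. i < n \<Longrightarrow> k < i \<Longrightarrow> (i,k) \<notin> V \<Longrightarrow> A $$ (i,k) = 0"
  shows "i < n \<Longrightarrow> k < i \<Longrightarrow> (i,k) \<notin> V \<Longrightarrow> L $$ (i,k) = 0"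
proof (induction k arbitrary: i rule: less_induct)
  case (less k i)
  have Lc: "L \<in> carrier_mat n n" and Dc: "D \<in> carrier_mat n n" and dD: "diagonal_mat D"
    and Lup: "\<And>a b. a < n \<Longrightarrow> b < n \<Longrightarrow> a < b \<Longrightarrow> L $$ (a,b) = 0"
    and Ldiag: "\<And>a. a < n \<Longrightarrow> L $$ (a,a) = 1" and Dpos: "\<And>a. a < n \<Longrightarrow> D $$ (a,a) > 0"
    using L D unfolding unit_lower_triangular_def pos_diagonal_def by auto
  have kn: "k < n" using less by simp
  have "A $$ (i,k) = (\<Sum>m<n. L $$ (i,m) * D $$ (m,m) * L $$ (k,m))"
    unfolding A using ldl_entry[OF Lc Dc dD] less kn by simp
  also have "\<dots> = L $$ (i,k) * D $$ (k,k) * L $$ (k,k)"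
  proof (rule sum_eq_single_term)
    fix m assume m: "m \<in> {..<n}" "m \<noteq> k"
    show "L $$ (i,m) * D $$ (m,m) * L $$ (k,m) = 0"
    proof (cases "k < m")
      case True
      then show ?thesis using Lup kn m by simp
    next
      case False
      then have mk: "m < k" using m by simp
      show ?thesis
      proof (rule ccontr)
        assume "L $$ (i,m) * D $$ (m,m) * L $$ (k,m) \<noteq> 0"
        then have "L $$ (i,m) \<noteq> 0" "L $$ (k,m) \<noteq> 0" by auto
        then have "(i,m) \<in> V" "(k,m) \<in> V"
          using less.IH[OF mk, of i] less.IH[OF mk, of k] less.prems kn mk by auto
        then have "(i,k) \<in> V" using filled less.prems mk unfolding filled_pattern_def by blast
        then show False using less.prems by simp
      qed
    qed
  qed (use kn in auto)
  also have "\<dots> = L $$ (i,k) * D $$ (k,k)" using Ldiag kn by simp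
  finally have "L $$ (i,k) * D $$ (k,k) = 0" using Az less by simp
  then show ?case using Dpos[OF kn] by simp
qed

lemma unit_lower_row_solve:
  fixes r :: "nat \<Rightarrow> real"
  assumes L: "unit_lower_triangular n L"
    and E: "\<And>c. c < n \<Longrightarrow> (\<Sum>k<n. r k * L $$ (c,k)) = (if c = i then 1 else 0)"
    and i: "i < n"
  shows unit_lower_row_solve_zero: "c < i \<Longrightarrow> r c = 0"
    and unit_lower_row_solve_one: "r i = 1"
proof -
  have Ldiag: "\<And>c. c < n \<Longrightarrow> L $$ (c,c) = 1"
    and Lup: "\<And>c k. c < n \<Longrightarrow> k < n \<Longrightarrow> c < k \<Longrightarrow> L $$ (c,k) = 0"
    using L unfolding unit_lower_triangular_def by auto
  have S: "(\<Sum>k<n. r k * L $$ (c,k)) = r c" if c: "c < n" "\<And>k. k < c \<Longrightarrow> r k = 0" for c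
  proof -
    have "(\<Sum>k<n. r k * L $$ (c,k)) = r c * L $$ (c,c)"
      using c Lup by (intro sum_eq_single_term) (auto simp: neq_iff)
    then show ?thesis using Ldiag c by simp
  qed
  show Z: "c < i \<Longrightarrow> r c = 0" for c
  proof (induction c rule: less_induct)
    case (less c)
    have "r c = (\<Sum>k<n. r k * L $$ (c,k))" using S[of c] less i by simp
    also have "\<dots> = 0" using E[of c] less i by simp
    finally show ?case .
  qed
  have "r i = (\<Sum>k<n. r k * L $$ (i,k))" using S[of i] Z i by simp
  also have "\<dots> = 1" using E i by simp
  finally show "r i = 1" .
qed

text \<open>If Z inverts L D L^T then Z L = L^-T D^-1 is upper triangular with diagonal 1/D,
  so (Z L)_ij = delta_ij / D_jj for i >= j.\<close>

lemma ldl_inverse_column: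
  assumes L: "unit_lower_triangular n L" and D: "pos_diagonal n D"
    and Z: "Z \<in> carrier_mat n n" and inv: "Z * (L * D * transpose_mat L) = 1\<^sub>m n"
    and i: "i < n" and ji: "j \<le> i"
  shows "(Z * L) $$ (i,j) = (if i = j then 1 / D $$ (j,j) else 0)"
proof -
  have Lc: "L \<in> carrier_mat n n" and Dc: "D \<in> carrier_mat n n" and dD: "diagonal_mat D"
    and Dpos: "D $$ (j,j) > 0"
    using L D i ji unfolding unit_lower_triangular_def pos_diagonal_def by auto
  have LTc: "transpose_mat L \<in> carrier_mat n n" using Lc by simp
  define M where "M = Z * L"
  have Mc: "M \<in> carrier_mat n n" unfolding M_def using Z Lc by simp
  have MDL: "M * D * transpose_mat L = 1\<^sub>m n"
    unfolding M_def using inv assoc_mult_mat[OF Z Lc Dc]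
      assoc_mult_mat[OF Z mult_carrier_mat[OF Lc Dc] LTc] by simp
  define r where "r k = M $$ (i,k) * D $$ (k,k)" for k
  have E: "(\<Sum>k<n. r k * L $$ (c,k)) = (if c = i then 1 else 0)" if c: "c < n" for c
  proof -
    have "(M * D * transpose_mat L) $$ (i,c)
        = (\<Sum>a<n. M $$ (i,a) * D $$ (a,a) * transpose_mat L $$ (a,c))"
      by (rule mult_diag_mult_entry[OF Mc Dc LTc dD i c])
    also have "\<dots> = (\<Sum>k<n. r k * L $$ (c,k))"
      unfolding r_def using Lc c by (intro sum.cong) auto
    finally show ?thesis using MDL i c by auto
  qed
  show ?thesis
  proof (cases "i = j")
    case True
    then have "r i = 1" using unit_lower_row_solve_one[OF L E i] by simp
    then show ?thesis using True Dpos unfolding r_def M_def by (simp add: field_simps)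
  next
    case False
    then have "r j = 0" using unit_lower_row_solve_zero[OF L E i] ji by simp
    then show ?thesis using False Dpos unfolding r_def M_def by simp
  qed
qed

lemma Iset_member:
  assumes "sparsity_pattern n V" "i \<in> Iset V j"
  shows "j < i" "i < n" "(i,j) \<in> V"
  using assms unfolding sparsity_pattern_def Iset_def by auto

lemma Iset_clique:
  assumes V: "sparsity_pattern n V" and filled: "filled_pattern V" and j: "j < n"
    and a: "a \<in> insert j (Iset V j)" and b: "b \<in> insert j (Iset V j)"
  shows "(max a b, min a b) \<in> V"
proof -
  have ab: "a < n" "b < n" using a b j Iset_member[OF V] by auto
  consider "a = b" | "a = j" "b \<in> Iset V j" | "b = j" "a \<in> Iset V j"
    | "a \<in> Iset V j" "b \<in> Iset V j" "a \<noteq> b"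
    using a b by auto
  then show ?thesis
  proof cases
    case 1
    then show ?thesis using V ab unfolding sparsity_pattern_def by simp
  next
    case 2
    then show ?thesis using Iset_member[OF V, of b j] by (simp add: max_def min_def)
  next
    case 3
    then show ?thesis using Iset_member[OF V, of a j] by (simp add: max_def min_def)
  next
    case 4
    then have "min a b < max a b" "j < min a b" "(max a b, j) \<in> V" "(min a b, j) \<in> V"
      using Iset_member[OF V, of a j] Iset_member[OF V, of b j] by (auto simp: max_def min_def)
    then show ?thesis using filled unfolding filled_pattern_def by blast
  qed
qed

lemma ldl_column_support:
  assumes V: "sparsity_pattern n V" and filled: "filled_pattern V"
    and L: "unit_lower_triangular n L" and D: "pos_diagonal n D"
    and A: "in_SV n V A" and fac: "A = L * D * transpose_mat L"
    and j: "j < n" and k: "k < n" "k \<notin> insert j (Iset V j)"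
  shows "L $$ (k,j) = 0"
proof (cases "k < j")
  case True
  then show ?thesis using L k j unfolding unit_lower_triangular_def by auto
next
  case False
  then have kj: "j < k" "(k,j) \<notin> V" using k unfolding Iset_def by auto
  have "A $$ (a,b) = 0" if "a < n" "b < a" "(a,b) \<notin> V" for a b
    using A that unfolding in_SV_def by (auto simp: max_def min_def)
  then show ?thesis using ldl_no_fill[OF filled L D fac] k kj by blast
qed

lemma deriv_eventually_const:
  fixes f :: "real \<Rightarrow> real"
  assumes f: "(f has_real_derivative f') (at x)" and ev: "eventually (\<lambda>t. f t = c) (nhds x)"
  shows "f' = 0"
proof -
  have "(f has_real_derivative 0) (at x)"
    using DERIV_cong_ev[OF refl ev refl] by simp
  then show ?thesis using f DERIV_unique by blast
qed

lemma eventually_abs_less: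
  assumes "(\<epsilon>::real) > 0"
  shows "eventually (\<lambda>t. \<bar>t\<bar> < \<epsilon>) (nhds 0)"
  using assms by (auto simp: eventually_nhds_metric dist_real_def intro!: exI[of _ \<epsilon>])

lemma ldl_path_inverse_column:
  fixes X Y :: "real mat" and L D :: "real \<Rightarrow> real mat"
  assumes X: "X \<in> carrier_mat n n" and Y: "Y \<in> carrier_mat n n" and dX: "det X \<noteq> 0"
    and eps: "\<epsilon> > 0"
    and fac: "\<And>t. \<bar>t\<bar> < \<epsilon> \<Longrightarrow> unit_lower_triangular n (L t) \<and> pos_diagonal n (D t) \<and>
                 X + t \<cdot>\<^sub>m Y = L t * D t * transpose_mat (L t)"
    and i: "i < n" and ji: "j \<le> i"
  shows "eventually (\<lambda>t. (\<Sum>k<n. adj_inv (X + t \<cdot>\<^sub>m Y) $$ (i,k) * L t $$ (k,j))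
           = (if i = j then inverse (D t $$ (j,j)) else 0)) (nhds 0)"
  using eventually_abs_less[OF eps] affine_det_eventually_nonzero[OF X Y dX]
proof eventually_elim
  case (elim t)
  then have ft: "unit_lower_triangular n (L t)" "pos_diagonal n (D t)"
    "X + t \<cdot>\<^sub>m Y = L t * D t * transpose_mat (L t)" using fac by auto
  have Lt: "L t \<in> carrier_mat n n" using ft(1) unfolding unit_lower_triangular_def by simp
  have Zt: "adj_inv (X + t \<cdot>\<^sub>m Y) \<in> carrier_mat n n" using X Y by (intro adj_inv_carrier) auto
  have "adj_inv (X + t \<cdot>\<^sub>m Y) * (X + t \<cdot>\<^sub>m Y) = 1\<^sub>m n"
    using X Y elim by (intro adj_inv_inverse(1)) auto
  then have "adj_inv (X + t \<cdot>\<^sub>m Y) * (L t * D t * transpose_mat (L t)) = 1\<^sub>m n"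
    unfolding ft(3) .
  then have "(adj_inv (X + t \<cdot>\<^sub>m Y) * L t) $$ (i,j) = (if i = j then 1 / D t $$ (j,j) else 0)"
    by (rule ldl_inverse_column[OF ft(1,2) Zt _ i ji])
  moreover have "j < n" using i ji by simp
  ultimately show ?case using mat_mult_entry[OF Zt Lt i] by (simp add: inverse_eq_divide)
qed

lemma ldl_path_inverse_column_deriv:
  fixes X Y L' :: "real mat" and L :: "real \<Rightarrow> real mat"
  assumes X: "X \<in> carrier_mat n n" and Y: "Y \<in> carrier_mat n n" and dX: "det X \<noteq> 0"
    and L0: "L 0 \<in> carrier_mat n n" and L': "L' \<in> carrier_mat n n"
    and L'_deriv: "\<And>i k. i < n \<Longrightarrow> k < n \<Longrightarrow>
                     ((\<lambda>t. L t $$ (i,k)) has_real_derivative L' $$ (i,k)) (at 0)"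
    and i: "i < n" and j: "j < n"
  shows "((\<lambda>t. \<Sum>k<n. adj_inv (X + t \<cdot>\<^sub>m Y) $$ (i,k) * L t $$ (k,j)) has_real_derivative
           - (adj_inv X * Y * adj_inv X * L 0) $$ (i,j) + (adj_inv X * L') $$ (i,j)) (at 0)"
proof -
  define W where "W = adj_inv X * Y * adj_inv X"
  have Z0c: "adj_inv X \<in> carrier_mat n n" using adj_inv_carrier[OF X] .
  have Wc: "W \<in> carrier_mat n n" unfolding W_def using Z0c Y by simp
  have Z0: "adj_inv (X + 0 \<cdot>\<^sub>m Y) = adj_inv X" using affine_at_zero[OF X Y] by simp
  have "((\<lambda>t. \<Sum>k<n. adj_inv (X + t \<cdot>\<^sub>m Y) $$ (i,k) * L t $$ (k,j)) has_real_derivative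
          (- W * L 0 + adj_inv X * L') $$ (i,j)) (at 0)"
  proof (rule mult_entry_deriv[where A="\<lambda>t. adj_inv (X + t \<cdot>\<^sub>m Y)" and A'="- W",
        unfolded Z0])
    fix a b assume ab: "a < n" "b < n"
    then have "(- W) $$ (a,b) = - W $$ (a,b)" using carrier_matD[OF Wc] by simp
    then show "((\<lambda>t. adj_inv (X + t \<cdot>\<^sub>m Y) $$ (a,b)) has_real_derivative (- W) $$ (a,b)) (at 0)"
      using adj_inv_affine_deriv[OF X Y dX ab] unfolding W_def by simp
  qed (use L'_deriv Z0c L0 Wc L' i j in auto)
  moreover have "(- W * L 0 + adj_inv X * L') $$ (i,j) = - (W * L 0) $$ (i,j) + (adj_inv X * L') $$ (i,j)"
    using carrier_matD[OF Wc] carrier_matD[OF L0] carrier_matD[OF Z0c] carrier_matD[OF L'] i j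
    by simp
  ultimately show ?thesis unfolding W_def by simp
qed

lemma ldl_inverse_column_deriv:
  fixes X Y L' D' :: "real mat" and L D :: "real \<Rightarrow> real mat"
  assumes X: "X \<in> carrier_mat n n" and Y: "Y \<in> carrier_mat n n" and dX: "det X \<noteq> 0"
    and eps: "\<epsilon> > 0"
    and fac: "\<And>t. \<bar>t\<bar> < \<epsilon> \<Longrightarrow> unit_lower_triangular n (L t) \<and> pos_diagonal n (D t) \<and>
                 X + t \<cdot>\<^sub>m Y = L t * D t * transpose_mat (L t)"
    and L': "L' \<in> carrier_mat n n"
    and L'_deriv: "\<And>i k. i < n \<Longrightarrow> k < n \<Longrightarrow>
                     ((\<lambda>t. L t $$ (i,k)) has_real_derivative L' $$ (i,k)) (at 0)"
    and D'_deriv: "((\<lambda>t. D t $$ (j,j)) has_real_derivative D' $$ (j,j)) (at 0)"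
    and i: "i < n" and ji: "j \<le> i"
  shows "(adj_inv X * Y * adj_inv X * L 0) $$ (i,j)
         = (adj_inv X * L') $$ (i,j) + (if i = j then D' $$ (j,j) / (D 0 $$ (j,j))^2 else 0)"
proof -
  define c where "c = D' $$ (j,j) / (D 0 $$ (j,j))^2"
  have j: "j < n" using i ji by simp
  have fac0: "unit_lower_triangular n (L 0)" "pos_diagonal n (D 0)" using fac[of 0] eps by auto
  have L0: "L 0 \<in> carrier_mat n n" using fac0 unfolding unit_lower_triangular_def by simp
  have D0: "D 0 $$ (j,j) \<noteq> 0" using fac0 j unfolding pos_diagonal_def by force
  have "((\<lambda>t. inverse (D t $$ (j,j))) has_real_derivative - c) (at 0)"
    using DERIV_inverse_fun[OF D'_deriv D0] unfolding c_def by (simp add: divide_inverse numeral_2_eq_2)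
  then have "((\<lambda>t. if i = j then inverse (D t $$ (j,j)) else 0) has_real_derivative
          (if i = j then - c else 0)) (at 0)"
    by (cases "i = j") auto
  then have "((\<lambda>t. \<Sum>k<n. adj_inv (X + t \<cdot>\<^sub>m Y) $$ (i,k) * L t $$ (k,j)) has_real_derivative
          (if i = j then - c else 0)) (at 0)"
    using DERIV_cong_ev[OF refl ldl_path_inverse_column[OF X Y dX eps fac i ji] refl] by simp
  then have "- (adj_inv X * Y * adj_inv X * L 0) $$ (i,j) + (adj_inv X * L') $$ (i,j)
      = (if i = j then - c else 0)"
    using ldl_path_inverse_column_deriv[OF X Y dX L0 L' L'_deriv i j] DERIV_unique by blast
  then show ?thesis unfolding c_def[symmetric] by (cases "i = j") auto
qed

lemma ldl_path_relations:
  fixes X Y L' D' :: "real mat" and L D :: "real \<Rightarrow> real mat"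
  assumes V: "sparsity_pattern n V"
    and X: "X \<in> carrier_mat n n" and Y: "Y \<in> carrier_mat n n" and dX: "det X \<noteq> 0"
    and eps: "\<epsilon> > 0"
    and fac: "\<And>t. \<bar>t\<bar> < \<epsilon> \<Longrightarrow> unit_lower_triangular n (L t) \<and> pos_diagonal n (D t) \<and>
                 X + t \<cdot>\<^sub>m Y = L t * D t * transpose_mat (L t)"
    and L': "L' \<in> carrier_mat n n"
    and L'_deriv: "\<And>i k. i < n \<Longrightarrow> k < n \<Longrightarrow>
                     ((\<lambda>t. L t $$ (i,k)) has_real_derivative L' $$ (i,k)) (at 0)"
    and D'_deriv: "((\<lambda>t. D t $$ (j,j)) has_real_derivative D' $$ (j,j)) (at 0)"
    and j: "j < n"
  shows "\<And>i. i \<in> Iset V j \<Longrightarrow> (adj_inv X * L 0) $$ (i,j) = 0"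
    and "\<And>i. i \<in> insert j (Iset V j) \<Longrightarrow> (adj_inv X * Y * adj_inv X * L 0) $$ (i,j)
           = (adj_inv X * L') $$ (i,j) + (if i = j then D' $$ (j,j) / (D 0 $$ (j,j))^2 else 0)"
proof -
  fix i assume i: "i \<in> Iset V j"
  have fac0: "unit_lower_triangular n (L 0)" "pos_diagonal n (D 0)"
    and X0: "L 0 * D 0 * transpose_mat (L 0) = X"
    using fac[of 0] eps affine_at_zero[OF X Y] by auto
  have "i < n" "j \<le> i" "i \<noteq> j" using Iset_member[OF V i] by auto
  then show "(adj_inv X * L 0) $$ (i,j) = 0"
    using ldl_inverse_column[OF fac0 adj_inv_carrier[OF X], of i j] adj_inv_inverse(1)[OF X dX] X0
    by simp
next
  fix i assume "i \<in> insert j (Iset V j)"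
  then have "i < n" "j \<le> i" using Iset_member[OF V, of i j] j by auto
  then show "(adj_inv X * Y * adj_inv X * L 0) $$ (i,j)
      = (adj_inv X * L') $$ (i,j) + (if i = j then D' $$ (j,j) / (D 0 $$ (j,j))^2 else 0)"
    using ldl_inverse_column_deriv[OF X Y dX eps fac L' L'_deriv D'_deriv] by blast
qed

lemma ldl_deriv_column_support:
  fixes X Y L' :: "real mat" and L D :: "real \<Rightarrow> real mat"
  assumes V: "sparsity_pattern n V" and filled: "filled_pattern V"
    and X: "in_SV n V X" and Y: "in_SV n V Y" and eps: "\<epsilon> > 0"
    and fac: "\<And>t. \<bar>t\<bar> < \<epsilon> \<Longrightarrow> unit_lower_triangular n (L t) \<and> pos_diagonal n (D t) \<and>
                 X + t \<cdot>\<^sub>m Y = L t * D t * transpose_mat (L t)"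
    and L'_deriv: "((\<lambda>t. L t $$ (k,j)) has_real_derivative L' $$ (k,j)) (at 0)"
    and j: "j < n" and k: "k < n" "k \<notin> Iset V j"
  shows "L' $$ (k,j) = 0"
proof (rule deriv_eventually_const[OF L'_deriv])
  show "eventually (\<lambda>t. L t $$ (k,j) = (if k = j then 1 else 0)) (nhds 0)"
    using eventually_abs_less[OF eps]
  proof eventually_elim
    case (elim t)
    then have ft: "unit_lower_triangular n (L t)" "pos_diagonal n (D t)"
      "X + t \<cdot>\<^sub>m Y = L t * D t * transpose_mat (L t)" using fac by auto
    show ?case
    proof (cases "k = j")
      case True
      then show ?thesis using ft(1) j unfolding unit_lower_triangular_def by simp
    next
      case False
      then have "k \<notin> insert j (Iset V j)" using k by simp
      then show ?thesis
        using ldl_column_support[OF V filled ft(1,2) in_SV_affine[OF X Y] ft(3) j k(1)] False by simp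
    qed
  qed
qed

lemma pick_bij:
  assumes "finite I"
  shows "bij_betw (pick I) {..<card I} I"
proof -
  have inj: "inj_on (pick I) {..<card I}"
  proof (rule inj_onI)
    fix a b assume ab: "a \<in> {..<card I}" "b \<in> {..<card I}" "pick I a = pick I b"
    show "a = b"
    proof (rule ccontr)
      assume "a \<noteq> b"
      then have "a < b \<or> b < a" by auto
      then show False using ab pick_mono[of b I a] pick_mono[of a I b] by auto
    qed
  qed
  have sub: "pick I ` {..<card I} \<subseteq> I" using pick_in_set by auto
  have "card (pick I ` {..<card I}) = card I" using card_image[OF inj] by simp
  then have "pick I ` {..<card I} = I" using card_subset_eq[OF assms sub] by simp
  then show ?thesis using inj unfolding bij_betw_def by simp
qed

lemma pick_bound:
  assumes "I \<subseteq> {..<n}" "a < card I"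
  shows "pick I a \<in> I" "pick I a < n"
  using pick_in_set[of a I] assms by auto

lemma sum_over_support:
  fixes f :: "nat \<Rightarrow> 'a::comm_monoid_add"
  assumes I: "I \<subseteq> {..<n}" and j: "j < n" "j \<notin> I"
    and z: "\<And>k. k < n \<Longrightarrow> k \<notin> insert j I \<Longrightarrow> f k = 0"
  shows "(\<Sum>k<n. f k) = f j + (\<Sum>b<card I. f (pick I b))"
proof -
  have fin: "finite I" using I finite_subset by blast
  have "(\<Sum>k<n. f k) = (\<Sum>k\<in>insert j I. f k)"
    by (rule sum.mono_neutral_right) (use I j z in auto)
  also have "\<dots> = f j + (\<Sum>k\<in>I. f k)" using fin j by simp
  also have "(\<Sum>k\<in>I. f k) = (\<Sum>b<card I. f (pick I b))"
    using sum.reindex_bij_betw[OF pick_bij[OF fin], of f] by simp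
  finally show ?thesis .
qed

lemma mult_entry_column_support:
  assumes M: "M \<in> carrier_mat n n" and N: "N \<in> carrier_mat n n"
    and I: "I \<subseteq> {..<n}" and j: "j < n" "j \<notin> I" and i: "i < n"
    and supp: "\<And>k. k < n \<Longrightarrow> k \<notin> insert j I \<Longrightarrow> N $$ (k,j) = 0"
  shows "(M * N) $$ (i,j) = M $$ (i,j) * N $$ (j,j) + (\<Sum>b<card I. M $$ (i, pick I b) * N $$ (pick I b, j))"
  unfolding mat_mult_entry[OF M N i j(1)] by (rule sum_over_support[OF I j]) (simp add: supp)

lemma submatrix_carrier:
  assumes "A \<in> carrier_mat n n" "I \<subseteq> {..<n}" "J \<subseteq> {..<n}"
  shows "submatrix A I J \<in> carrier_mat (card I) (card J)"
proof -
  have "{i. i < dim_row A \<and> i \<in> I} = I" "{i. i < dim_col A \<and> i \<in> J} = J" using assms by auto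
  then show ?thesis by (intro carrier_matI) (simp_all add: dim_submatrix)
qed

lemma submatrix_entry:
  assumes "A \<in> carrier_mat n n" "I \<subseteq> {..<n}" "J \<subseteq> {..<n}" "a < card I" "b < card J"
  shows "submatrix A I J $$ (a,b) = A $$ (pick I a, pick J b)"
proof -
  have "{i. i < dim_row A \<and> i \<in> I} = I" "{i. i < dim_col A \<and> i \<in> J} = J" using assms by auto
  then show ?thesis using assms by (intro submatrix_index) auto
qed

lemma submatrix_col_entry:
  assumes "A \<in> carrier_mat n n" "I \<subseteq> {..<n}" "j < n" "a < card I"
  shows "submatrix A I {j} $$ (a,0) = A $$ (pick I a, j)"
proof -
  have "pick {j} 0 = j" by (simp add: Least_equality)
  then show ?thesis using submatrix_entry[of A n I "{j}" a 0] assms by simp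
qed

lemma submatrix_symmetric:
  assumes T: "T \<in> carrier_mat n n" "transpose_mat T = T" and I: "I \<subseteq> {..<n}"
  shows "transpose_mat (submatrix T I I) = submatrix T I I"
proof -
  have c: "submatrix T I I \<in> carrier_mat (card I) (card I)" by (rule submatrix_carrier[OF T(1) I I])
  show ?thesis
  proof (rule eq_matI)
    fix a b assume "a < dim_row (submatrix T I I)" "b < dim_col (submatrix T I I)"
    then have ab: "a < card I" "b < card I" using c by auto
    have "transpose_mat (submatrix T I I) $$ (a,b) = T $$ (pick I b, pick I a)"
      using ab c submatrix_entry[OF T(1) I I ab(2,1)] by simp
    also have "\<dots> = T $$ (pick I a, pick I b)"
      using symmetric_entry[OF T(2,1)] pick_bound[OF I] ab by blast
    also have "\<dots> = submatrix T I I $$ (a,b)" using submatrix_entry[OF T(1) I I ab] by simp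
    finally show "transpose_mat (submatrix T I I) $$ (a,b) = submatrix T I I $$ (a,b)" .
  qed (use c in auto)
qed

lemma block_upper_unitriangular_mult:
  fixes l c :: "'a::comm_ring_1 mat"
  assumes l: "l \<in> carrier_mat m 1" and a: "a \<in> carrier_mat 1 1"
    and c: "c \<in> carrier_mat m 1" and B: "B \<in> carrier_mat m m"
  shows "four_block_mat (1\<^sub>m 1) (transpose_mat l) (0\<^sub>m m 1) (1\<^sub>m m) * four_block_mat a (transpose_mat c) c B
      = four_block_mat (a + transpose_mat l * c) (transpose_mat c + transpose_mat l * B) c B"
proof -
  have lt: "transpose_mat l \<in> carrier_mat 1 m" and ct: "transpose_mat c \<in> carrier_mat 1 m"
    using l c by auto
  show ?thesis
    by (subst mult_four_block_mat[OF one_carrier_mat lt zero_carrier_mat one_carrier_mat a ct c B])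
      (use a c B ct in simp)
qed

lemma block_lower_unitriangular_mult:
  fixes l c :: "'a::comm_ring_1 mat"
  assumes l: "l \<in> carrier_mat m 1" and P: "P \<in> carrier_mat 1 1" "Q \<in> carrier_mat 1 m"
    and c: "c \<in> carrier_mat m 1" and B: "B \<in> carrier_mat m m"
  shows "four_block_mat P Q c B * four_block_mat (1\<^sub>m 1) (0\<^sub>m 1 m) l (1\<^sub>m m)
      = four_block_mat (P + Q * l) Q (c + B * l) B"
  by (subst mult_four_block_mat[OF P c B one_carrier_mat zero_carrier_mat l one_carrier_mat])
      (use P c B l in simp)

lemma congruence_four_block:
  fixes l c :: "'a::comm_ring_1 mat"
  assumes l: "l \<in> carrier_mat m 1" and a: "a \<in> carrier_mat 1 1"
    and c: "c \<in> carrier_mat m 1" and B: "B \<in> carrier_mat m m"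
  shows "four_block_mat (1\<^sub>m 1) (transpose_mat l) (0\<^sub>m m 1) (1\<^sub>m m) * four_block_mat a (transpose_mat c) c B
           * four_block_mat (1\<^sub>m 1) (0\<^sub>m 1 m) l (1\<^sub>m m)
       = four_block_mat (a + transpose_mat l * c + (transpose_mat c + transpose_mat l * B) * l)
           (transpose_mat c + transpose_mat l * B) (c + B * l) B"
proof -
  have P: "a + transpose_mat l * c \<in> carrier_mat 1 1" "transpose_mat c + transpose_mat l * B \<in> carrier_mat 1 m"
    using a c B l by auto
  show ?thesis unfolding block_upper_unitriangular_mult[OF l a c B] by (rule block_lower_unitriangular_mult[OF l P c B])
qed

text \<open>Scalar identity behind the (1,1) block: using S_II l = -S_Ij and symmetry of S_II,
  l^T (S_II l') = -S_Ij^T l'.\<close>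

lemma corner_identity:
  fixes l l' sj tj :: "nat \<Rightarrow> real" and Sb :: "nat \<Rightarrow> nat \<Rightarrow> real"
  assumes F1: "\<And>a. a < m \<Longrightarrow> sj a + (\<Sum>b<m. Sb a b * l b) = 0"
    and F3: "tjj + (\<Sum>b<m. tj b * l b) = c + (\<Sum>b<m. sj b * l' b)"
    and sym: "\<And>a b. a < m \<Longrightarrow> b < m \<Longrightarrow> Sb a b = Sb b a"
  shows "tjj + (\<Sum>a<m. l a * tj a) + (\<Sum>a<m. (\<Sum>b<m. Sb a b * l' b) * l a) = c"
proof -
  have "(\<Sum>a<m. (\<Sum>b<m. Sb a b * l' b) * l a) = (\<Sum>a<m. \<Sum>b<m. Sb a b * l' b * l a)"
    by (simp add: sum_distrib_right)
  also have "\<dots> = (\<Sum>b<m. \<Sum>a<m. Sb a b * l' b * l a)" by (rule sum.swap)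
  also have "\<dots> = (\<Sum>b<m. l' b * (\<Sum>a<m. Sb b a * l a))"
  proof (rule sum.cong[OF refl])
    fix b assume b: "b \<in> {..<m}"
    have "(\<Sum>a<m. Sb a b * l' b * l a) = (\<Sum>a<m. l' b * (Sb b a * l a))"
      using sym b by (intro sum.cong) auto
    then show "(\<Sum>a<m. Sb a b * l' b * l a) = l' b * (\<Sum>a<m. Sb b a * l a)"
      by (simp add: sum_distrib_left)
  qed
  also have "\<dots> = (\<Sum>b<m. - (sj b * l' b))"
  proof (rule sum.cong[OF refl])
    fix b assume "b \<in> {..<m}"
    then have "sj b + (\<Sum>a<m. Sb b a * l a) = 0" using F1 by simp
    then have "(\<Sum>a<m. Sb b a * l a) = - sj b" by linarith
    then show "l' b * (\<Sum>a<m. Sb b a * l a) = - (sj b * l' b)" by simp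
  qed
  also have "\<dots> = - (\<Sum>b<m. sj b * l' b)" by (simp add: sum_negf)
  finally have "(\<Sum>a<m. (\<Sum>b<m. Sb a b * l' b) * l a) = - (\<Sum>b<m. sj b * l' b)" .
  moreover have "(\<Sum>a<m. l a * tj a) = (\<Sum>b<m. tj b * l b)" by (simp add: mult.commute)
  ultimately show ?thesis using F3 by linarith
qed

lemma inner_col_entry:
  assumes u: "u \<in> carrier_mat m 1" and v: "v \<in> carrier_mat m 1"
  shows "(transpose_mat u * v) $$ (0,0) = (\<Sum>a<m. u $$ (a,0) * v $$ (a,0))"
proof -
  have "(transpose_mat u * v) $$ (0,0) = (\<Sum>a<m. transpose_mat u $$ (0,a) * v $$ (a,0))"
    using u v by (intro mat_mult_entry) auto
  also have "\<dots> = (\<Sum>a<m. u $$ (a,0) * v $$ (a,0))" using u by (intro sum.cong) auto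
  finally show ?thesis .
qed

lemma submatrix_mult_col_entry:
  assumes A: "A \<in> carrier_mat n n" and B: "B \<in> carrier_mat n n" and I: "I \<subseteq> {..<n}"
    and j: "j < n" and a: "a < card I"
  shows "(submatrix A I I * submatrix B I {j}) $$ (a,0)
       = (\<Sum>b<card I. A $$ (pick I a, pick I b) * B $$ (pick I b, j))"
proof -
  have js: "{j} \<subseteq> {..<n}" using j by simp
  have "(submatrix A I I * submatrix B I {j}) $$ (a,0)
      = (\<Sum>b<card I. submatrix A I I $$ (a,b) * submatrix B I {j} $$ (b,0))"
    using submatrix_carrier[OF A I I] submatrix_carrier[OF B I js] a by (intro mat_mult_entry) auto
  also have "\<dots> = (\<Sum>b<card I. A $$ (pick I a, pick I b) * B $$ (pick I b, j))"
    using submatrix_entry[OF A I I a] submatrix_col_entry[OF B I j] by (intro sum.cong) auto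
  finally show ?thesis .
qed

lemma submatrix_column_block:
  fixes S T L0 L' :: "real mat"
  assumes S: "S \<in> carrier_mat n n" and T: "T \<in> carrier_mat n n"
    and L0: "L0 \<in> carrier_mat n n" and L': "L' \<in> carrier_mat n n"
    and I: "I \<subseteq> {..<n}" and j: "j < n"
    and F2: "\<And>a. a < card I \<Longrightarrow> T $$ (pick I a, j) + (\<Sum>b<card I. T $$ (pick I a, pick I b) * L0 $$ (pick I b, j))
               = (\<Sum>b<card I. S $$ (pick I a, pick I b) * L' $$ (pick I b, j))"
  shows "submatrix T I {j} + submatrix T I I * submatrix L0 I {j} = submatrix S I I * submatrix L' I {j}"
proof -
  have js: "{j} \<subseteq> {..<n}" using j by simp
  have c: "submatrix T I {j} \<in> carrier_mat (card I) 1" "submatrix T I I \<in> carrier_mat (card I) (card I)"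
    "submatrix L0 I {j} \<in> carrier_mat (card I) 1" "submatrix S I I \<in> carrier_mat (card I) (card I)"
    "submatrix L' I {j} \<in> carrier_mat (card I) 1"
    using submatrix_carrier[OF T I js] submatrix_carrier[OF T I I] submatrix_carrier[OF L0 I js]
      submatrix_carrier[OF S I I] submatrix_carrier[OF L' I js] by auto
  show ?thesis
  proof (rule eq_matI)
    fix a b assume "a < dim_row (submatrix S I I * submatrix L' I {j})"
      "b < dim_col (submatrix S I I * submatrix L' I {j})"
    then have a: "a < card I" and b: "b = 0" using c by auto
    have "(submatrix T I {j} + submatrix T I I * submatrix L0 I {j}) $$ (a,0)
        = T $$ (pick I a, j) + (\<Sum>b<card I. T $$ (pick I a, pick I b) * L0 $$ (pick I b, j))"
      using c a submatrix_col_entry[OF T I j a] submatrix_mult_col_entry[OF T L0 I j a] by simp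
    also have "\<dots> = (submatrix S I I * submatrix L' I {j}) $$ (a,0)"
      using F2[OF a] submatrix_mult_col_entry[OF S L' I j a] by simp
    finally show "(submatrix T I {j} + submatrix T I I * submatrix L0 I {j}) $$ (a,b)
        = (submatrix S I I * submatrix L' I {j}) $$ (a,b)" using b by simp
  qed (use c in auto)
qed

lemma submatrix_corner_block:
  fixes S T L0 L' :: "real mat" and c :: real
  assumes S: "S \<in> carrier_mat n n" "transpose_mat S = S" and T: "T \<in> carrier_mat n n"
    and L0: "L0 \<in> carrier_mat n n" and L': "L' \<in> carrier_mat n n"
    and I: "I \<subseteq> {..<n}" and j: "j < n"
    and F1: "\<And>a. a < card I \<Longrightarrow> S $$ (pick I a, j) + (\<Sum>b<card I. S $$ (pick I a, pick I b) * L0 $$ (pick I b, j)) = 0"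
    and F3: "T $$ (j,j) + (\<Sum>b<card I. T $$ (pick I b, j) * L0 $$ (pick I b, j))
               = c + (\<Sum>b<card I. S $$ (pick I b, j) * L' $$ (pick I b, j))"
  shows "submatrix T {j} {j} + transpose_mat (submatrix L0 I {j}) * submatrix T I {j}
           + transpose_mat (submatrix S I I * submatrix L' I {j}) * submatrix L0 I {j}
         = mat 1 1 (\<lambda>_. c)"
proof -
  have js: "{j} \<subseteq> {..<n}" using j by simp
  have c: "submatrix T {j} {j} \<in> carrier_mat 1 1" "submatrix T I {j} \<in> carrier_mat (card I) 1"
    "submatrix L0 I {j} \<in> carrier_mat (card I) 1"
    "submatrix S I I * submatrix L' I {j} \<in> carrier_mat (card I) 1"
    using submatrix_carrier[OF T js js] submatrix_carrier[OF T I js] submatrix_carrier[OF L0 I js]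
      submatrix_carrier[OF S(1) I I] submatrix_carrier[OF L' I js] by auto
  have Tjj: "submatrix T {j} {j} $$ (0,0) = T $$ (j,j)"
    using submatrix_col_entry[OF T js j, of 0] by (simp add: Least_equality)
  have e1: "(transpose_mat (submatrix L0 I {j}) * submatrix T I {j}) $$ (0,0)
      = (\<Sum>a<card I. L0 $$ (pick I a, j) * T $$ (pick I a, j))"
    unfolding inner_col_entry[OF c(3,2)]
    using submatrix_col_entry[OF L0 I j] submatrix_col_entry[OF T I j] by (intro sum.cong) auto
  have e2: "(transpose_mat (submatrix S I I * submatrix L' I {j}) * submatrix L0 I {j}) $$ (0,0)
      = (\<Sum>a<card I. (\<Sum>b<card I. S $$ (pick I a, pick I b) * L' $$ (pick I b, j)) * L0 $$ (pick I a, j))"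
    unfolding inner_col_entry[OF c(4,3)]
    using submatrix_mult_col_entry[OF S(1) L' I j] submatrix_col_entry[OF L0 I j] by (intro sum.cong) auto
  have sym: "S $$ (pick I a, pick I b) = S $$ (pick I b, pick I a)" if "a < card I" "b < card I" for a b
    using symmetric_entry[OF S(2,1)] pick_bound[OF I] that by blast
  have "T $$ (j,j) + (\<Sum>a<card I. L0 $$ (pick I a, j) * T $$ (pick I a, j))
      + (\<Sum>a<card I. (\<Sum>b<card I. S $$ (pick I a, pick I b) * L' $$ (pick I b, j)) * L0 $$ (pick I a, j)) = c"
    by (rule corner_identity[OF F1 F3 sym])
  then show ?thesis using c Tjj e1 e2 by (intro eq_matI) auto
qed

lemma block_identity_coordinates:
  fixes S T L0 L' :: "real mat" and c :: real
  assumes S: "S \<in> carrier_mat n n" "transpose_mat S = S"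
    and T: "T \<in> carrier_mat n n" "transpose_mat T = T"
    and L0: "L0 \<in> carrier_mat n n" and L': "L' \<in> carrier_mat n n"
    and I: "I \<subseteq> {..<n}" and j: "j < n"
    and F1: "\<And>a. a < card I \<Longrightarrow> S $$ (pick I a, j) + (\<Sum>b<card I. S $$ (pick I a, pick I b) * L0 $$ (pick I b, j)) = 0"
    and F2: "\<And>a. a < card I \<Longrightarrow> T $$ (pick I a, j) + (\<Sum>b<card I. T $$ (pick I a, pick I b) * L0 $$ (pick I b, j))
               = (\<Sum>b<card I. S $$ (pick I a, pick I b) * L' $$ (pick I b, j))"
    and F3: "T $$ (j,j) + (\<Sum>b<card I. T $$ (pick I b, j) * L0 $$ (pick I b, j))
               = c + (\<Sum>b<card I. S $$ (pick I b, j) * L' $$ (pick I b, j))"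
  shows "four_block_mat (1\<^sub>m 1) (transpose_mat (submatrix L0 I {j})) (0\<^sub>m (card I) 1) (1\<^sub>m (card I))
         * four_block_mat (submatrix T {j} {j}) (transpose_mat (submatrix T I {j}))
                          (submatrix T I {j}) (submatrix T I I)
         * four_block_mat (1\<^sub>m 1) (0\<^sub>m 1 (card I)) (submatrix L0 I {j}) (1\<^sub>m (card I))
       = four_block_mat (mat 1 1 (\<lambda>_. c))
                        (transpose_mat (submatrix S I I * submatrix L' I {j}))
                        (submatrix S I I * submatrix L' I {j})
                        (submatrix T I I)"
proof -
  have js: "{j} \<subseteq> {..<n}" using j by simp
  have c: "submatrix L0 I {j} \<in> carrier_mat (card I) 1" "submatrix T {j} {j} \<in> carrier_mat 1 1"
    "submatrix T I {j} \<in> carrier_mat (card I) 1" "submatrix T I I \<in> carrier_mat (card I) (card I)"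
    using submatrix_carrier[OF L0 I js] submatrix_carrier[OF T(1) js js]
      submatrix_carrier[OF T(1) I js] submatrix_carrier[OF T(1) I I] by auto
  have col: "submatrix T I {j} + submatrix T I I * submatrix L0 I {j} = submatrix S I I * submatrix L' I {j}"
    by (rule submatrix_column_block[OF S(1) T(1) L0 L' I j F2])
  have "transpose_mat (submatrix T I {j} + submatrix T I I * submatrix L0 I {j})
      = transpose_mat (submatrix T I {j}) + transpose_mat (submatrix L0 I {j}) * submatrix T I I"
    using transpose_add[OF c(3) mult_carrier_mat[OF c(4,1)]] transpose_mult[OF c(4,1)]
      submatrix_symmetric[OF T I] by simp
  then have row: "transpose_mat (submatrix T I {j}) + transpose_mat (submatrix L0 I {j}) * submatrix T I I
      = transpose_mat (submatrix S I I * submatrix L' I {j})" using col by simp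
  have corner: "submatrix T {j} {j} + transpose_mat (submatrix L0 I {j}) * submatrix T I {j}
      + transpose_mat (submatrix S I I * submatrix L' I {j}) * submatrix L0 I {j} = mat 1 1 (\<lambda>_. c)"
    by (rule submatrix_corner_block[OF S T(1) L0 L' I j F1 F3])
  show ?thesis
    using corner unfolding congruence_four_block[OF c] by (simp only: col row)
qed

lemma projP_carrier: "M \<in> carrier_mat n n \<Longrightarrow> projP V M \<in> carrier_mat n n"
  unfolding projP_def by auto

lemma projP_entry:
  "M \<in> carrier_mat n n \<Longrightarrow> a < n \<Longrightarrow> b < n \<Longrightarrow>
     projP V M $$ (a,b) = (if (max a b, min a b) \<in> V then M $$ (a,b) else 0)"
  unfolding projP_def by auto

lemma projP_symmetric:
  assumes M: "M \<in> carrier_mat n n" "transpose_mat M = M"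
  shows "transpose_mat (projP V M) = projP V M"
proof (rule eq_matI)
  fix a b assume "a < dim_row (projP V M)" "b < dim_col (projP V M)"
  then have ab: "a < n" "b < n" using projP_carrier[OF M(1), of V] by auto
  have "M $$ (b,a) = M $$ (a,b)" by (rule symmetric_entry[OF M(2,1) ab])
  then show "transpose_mat (projP V M) $$ (a,b) = projP V M $$ (a,b)"
    using projP_carrier[OF M(1), of V] projP_entry[of M n a b V] projP_entry[of M n b a V] M(1) ab
    by (simp add: max.commute min.commute)
qed (use projP_carrier[OF M(1), of V] in auto)

text \<open>On the clique {j} \<union> I_j the projection does not change a matrix, so a product
  with a column supported on the clique only sees projected entries.\<close>

lemma projP_mult_column:
  assumes V: "sparsity_pattern n V" and filled: "filled_pattern V" and j: "j < n"
    and M: "M \<in> carrier_mat n n" and N: "N \<in> carrier_mat n n" and i: "i \<in> insert j (Iset V j)"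
    and supp: "\<And>k. k < n \<Longrightarrow> k \<notin> insert j (Iset V j) \<Longrightarrow> N $$ (k,j) = 0"
  shows "(M * N) $$ (i,j) = projP V M $$ (i,j) * N $$ (j,j)
           + (\<Sum>b<card (Iset V j). projP V M $$ (i, pick (Iset V j) b) * N $$ (pick (Iset V j) b, j))"
proof -
  let ?I = "Iset V j"
  have I: "?I \<subseteq> {..<n}" "j \<notin> ?I" using Iset_member[OF V] by auto
  have in_n: "k < n" if "k \<in> insert j ?I" for k using that I j by auto
  have agree: "projP V M $$ (i,k) = M $$ (i,k)" if "k \<in> insert j ?I" for k
    using projP_entry[OF M in_n[OF i] in_n[OF that]] Iset_clique[OF V filled j i that] by simp
  have "(M * N) $$ (i,j) = M $$ (i,j) * N $$ (j,j) + (\<Sum>b<card ?I. M $$ (i, pick ?I b) * N $$ (pick ?I b, j))"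
    by (rule mult_entry_column_support[OF M N I(1) j I(2) in_n[OF i] supp])
  also have "\<dots> = projP V M $$ (i,j) * N $$ (j,j)
           + (\<Sum>b<card ?I. projP V M $$ (i, pick ?I b) * N $$ (pick ?I b, j))"
    using agree pick_bound[OF I(1)] by (intro arg_cong2[where f="(+)"] sum.cong) auto
  finally show ?thesis .
qed

lemma projected_relations:
  fixes Z W L0 L' :: "real mat" and c :: real
  assumes V: "sparsity_pattern n V" and filled: "filled_pattern V" and j: "j < n"
    and Z: "Z \<in> carrier_mat n n" and W: "W \<in> carrier_mat n n"
    and L0: "L0 \<in> carrier_mat n n" and L': "L' \<in> carrier_mat n n"
    and supp0: "\<And>k. k < n \<Longrightarrow> k \<notin> insert j (Iset V j) \<Longrightarrow> L0 $$ (k,j) = 0"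
    and supp': "\<And>k. k < n \<Longrightarrow> k \<notin> Iset V j \<Longrightarrow> L' $$ (k,j) = 0"
    and L0jj: "L0 $$ (j,j) = 1"
    and F1: "\<And>i. i \<in> Iset V j \<Longrightarrow> (Z * L0) $$ (i,j) = 0"
    and F2: "\<And>i. i \<in> insert j (Iset V j) \<Longrightarrow>
               (W * L0) $$ (i,j) = (Z * L') $$ (i,j) + (if i = j then c else 0)"
  defines "I \<equiv> Iset V j" and "S \<equiv> projP V Z" and "T \<equiv> projP V W"
  shows "\<And>a. a < card I \<Longrightarrow>
           S $$ (pick I a, j) + (\<Sum>b<card I. S $$ (pick I a, pick I b) * L0 $$ (pick I b, j)) = 0"
    and "\<And>a. a < card I \<Longrightarrow>
           T $$ (pick I a, j) + (\<Sum>b<card I. T $$ (pick I a, pick I b) * L0 $$ (pick I b, j))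
           = (\<Sum>b<card I. S $$ (pick I a, pick I b) * L' $$ (pick I b, j))"
    and "T $$ (j,j) + (\<Sum>b<card I. T $$ (j, pick I b) * L0 $$ (pick I b, j))
           = c + (\<Sum>b<card I. S $$ (j, pick I b) * L' $$ (pick I b, j))"
proof -
  have I: "I \<subseteq> {..<n}" "j \<notin> I" using Iset_member[OF V] unfolding I_def by auto
  have supp0: "\<And>k. k < n \<Longrightarrow> k \<notin> insert j I \<Longrightarrow> L0 $$ (k,j) = 0"
    and supp': "\<And>k. k < n \<Longrightarrow> k \<notin> insert j I \<Longrightarrow> L' $$ (k,j) = 0" and L'jj: "L' $$ (j,j) = 0"
    using supp0 supp' I j unfolding I_def by auto
  note expand = projP_mult_column[OF V filled j, folded I_def]
  have pI: "pick I a \<in> insert j I" if "a < card I" for a using pick_bound[OF I(1) that] by simp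
  have jI: "j \<in> insert j I" by simp
  have ZL0: "(Z * L0) $$ (i,j) = S $$ (i,j) + (\<Sum>b<card I. S $$ (i, pick I b) * L0 $$ (pick I b, j))"
    and WL0: "(W * L0) $$ (i,j) = T $$ (i,j) + (\<Sum>b<card I. T $$ (i, pick I b) * L0 $$ (pick I b, j))"
    and ZL': "(Z * L') $$ (i,j) = (\<Sum>b<card I. S $$ (i, pick I b) * L' $$ (pick I b, j))"
    if i: "i \<in> insert j I" for i
    using expand[OF Z L0 i supp0] expand[OF W L0 i supp0] expand[OF Z L' i supp'] L0jj L'jj
    unfolding S_def T_def by simp_all
  show "S $$ (pick I a, j) + (\<Sum>b<card I. S $$ (pick I a, pick I b) * L0 $$ (pick I b, j)) = 0"
    if a: "a < card I" for a
  proof -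
    have "(Z * L0) $$ (pick I a, j) = 0" using F1 pick_bound[OF I(1) a] unfolding I_def by simp
    then show ?thesis using ZL0[OF pI[OF a]] by linarith
  qed
  show "T $$ (pick I a, j) + (\<Sum>b<card I. T $$ (pick I a, pick I b) * L0 $$ (pick I b, j))
      = (\<Sum>b<card I. S $$ (pick I a, pick I b) * L' $$ (pick I b, j))"
    if a: "a < card I" for a
  proof -
    have "pick I a \<noteq> j" using pick_bound[OF I(1) a] I(2) by auto
    then have "(W * L0) $$ (pick I a, j) = (Z * L') $$ (pick I a, j)"
      using F2[of "pick I a"] pI[OF a] unfolding I_def by simp
    then show ?thesis using ZL0[OF pI[OF a]] WL0[OF pI[OF a]] ZL'[OF pI[OF a]] by linarith
  qed
  have "(W * L0) $$ (j,j) = (Z * L') $$ (j,j) + c" using F2[of j] by simp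
  then show "T $$ (j,j) + (\<Sum>b<card I. T $$ (j, pick I b) * L0 $$ (pick I b, j))
      = c + (\<Sum>b<card I. S $$ (j, pick I b) * L' $$ (pick I b, j))"
    using WL0[OF jI] ZL'[OF jI] by linarith
qed

lemma projected_block_identity:
  fixes Z W L0 L' :: "real mat" and c :: real
  assumes V: "sparsity_pattern n V" and filled: "filled_pattern V" and j: "j < n"
    and Z: "Z \<in> carrier_mat n n" "transpose_mat Z = Z"
    and W: "W \<in> carrier_mat n n" "transpose_mat W = W"
    and L0: "L0 \<in> carrier_mat n n" and L': "L' \<in> carrier_mat n n"
    and supp0: "\<And>k. k < n \<Longrightarrow> k \<notin> insert j (Iset V j) \<Longrightarrow> L0 $$ (k,j) = 0"
    and supp': "\<And>k. k < n \<Longrightarrow> k \<notin> Iset V j \<Longrightarrow> L' $$ (k,j) = 0"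
    and L0jj: "L0 $$ (j,j) = 1"
    and F1: "\<And>i. i \<in> Iset V j \<Longrightarrow> (Z * L0) $$ (i,j) = 0"
    and F2: "\<And>i. i \<in> insert j (Iset V j) \<Longrightarrow>
               (W * L0) $$ (i,j) = (Z * L') $$ (i,j) + (if i = j then c else 0)"
  shows "four_block_mat (1\<^sub>m 1) (transpose_mat (submatrix L0 (Iset V j) {j}))
            (0\<^sub>m (card (Iset V j)) 1) (1\<^sub>m (card (Iset V j)))
         * four_block_mat (submatrix (projP V W) {j} {j}) (transpose_mat (submatrix (projP V W) (Iset V j) {j}))
             (submatrix (projP V W) (Iset V j) {j}) (submatrix (projP V W) (Iset V j) (Iset V j))
         * four_block_mat (1\<^sub>m 1) (0\<^sub>m 1 (card (Iset V j))) (submatrix L0 (Iset V j) {j}) (1\<^sub>m (card (Iset V j)))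
       = four_block_mat (mat 1 1 (\<lambda>_. c))
           (transpose_mat (submatrix (projP V Z) (Iset V j) (Iset V j) * submatrix L' (Iset V j) {j}))
           (submatrix (projP V Z) (Iset V j) (Iset V j) * submatrix L' (Iset V j) {j})
           (submatrix (projP V W) (Iset V j) (Iset V j))"
proof -
  let ?I = "Iset V j"
  have I: "?I \<subseteq> {..<n}" using Iset_member[OF V] by auto
  have S: "projP V Z \<in> carrier_mat n n" "transpose_mat (projP V Z) = projP V Z"
    and T: "projP V W \<in> carrier_mat n n" "transpose_mat (projP V W) = projP V W"
    using projP_carrier projP_symmetric Z W by auto
  note relations = projected_relations[OF V filled j Z(1) W(1) L0 L' supp0 supp' L0jj F1 F2]
  have symT: "projP V W $$ (j, pick ?I b) = projP V W $$ (pick ?I b, j)"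
    and symS: "projP V Z $$ (j, pick ?I b) = projP V Z $$ (pick ?I b, j)" if "b < card ?I" for b
    using symmetric_entry[OF T(2,1) pick_bound(2)[OF I that] j]
      symmetric_entry[OF S(2,1) pick_bound(2)[OF I that] j] by auto
  have "(\<Sum>b<card ?I. projP V W $$ (j, pick ?I b) * L0 $$ (pick ?I b, j))
      = (\<Sum>b<card ?I. projP V W $$ (pick ?I b, j) * L0 $$ (pick ?I b, j))"
    by (rule sum.cong) (simp_all add: symT)
  moreover have "(\<Sum>b<card ?I. projP V Z $$ (j, pick ?I b) * L' $$ (pick ?I b, j))
      = (\<Sum>b<card ?I. projP V Z $$ (pick ?I b, j) * L' $$ (pick ?I b, j))"
    by (rule sum.cong) (simp_all add: symS)
  ultimately have corner: "projP V W $$ (j,j) + (\<Sum>b<card ?I. projP V W $$ (pick ?I b, j) * L0 $$ (pick ?I b, j))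
      = c + (\<Sum>b<card ?I. projP V Z $$ (pick ?I b, j) * L' $$ (pick ?I b, j))"
    using relations(3) by linarith
  show ?thesis by (rule block_identity_coordinates[OF S T L0 L' I j relations(1,2) corner])
qed

lemma congruence_symmetric:
  fixes Z Y :: "'a::comm_ring_1 mat"
  assumes Z: "Z \<in> carrier_mat n n" "transpose_mat Z = Z"
    and Y: "Y \<in> carrier_mat n n" "transpose_mat Y = Y"
  shows "transpose_mat (Z * Y * Z) = Z * Y * Z"
  using transpose_mult[OF mult_carrier_mat[OF Z(1) Y(1)] Z(1)] transpose_mult[OF Z(1) Y(1)] Z Y
    assoc_mult_mat[OF Z(1) Y(1) Z(1)] by simp

theorem mainTheorem6:
  fixes n :: nat and V :: "(nat \<times> nat) set"
    and X Y :: "real mat" and L D :: "real \<Rightarrow> real mat" and L' D' :: "real mat"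
  assumes V: "sparsity_pattern n V" and filled: "filled_pattern V"
    and X: "in_SV n V X" and Xpd: "pos_def_mat n X"
    and Y: "in_SV n V Y"
    and fact: "\<exists>\<epsilon>>0. \<forall>t. \<bar>t\<bar> < \<epsilon> \<longrightarrow>
         unit_lower_triangular n (L t) \<and> pos_diagonal n (D t) \<and>
         X + t \<cdot>\<^sub>m Y = L t * D t * transpose_mat (L t)"
    and L'_carr: "L' \<in> carrier_mat n n" and D'_carr: "D' \<in> carrier_mat n n"
    and L'_deriv: "\<forall>i<n. \<forall>k<n. ((\<lambda>t. L t $$ (i,k)) has_real_derivative L' $$ (i,k)) (at 0)"
    and D'_deriv: "\<forall>i<n. \<forall>k<n. ((\<lambda>t. D t $$ (i,k)) has_real_derivative D' $$ (i,k)) (at 0)"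
    and j: "j < n"
  shows
    "(let S = projP V (mat_inv X);
          T = projP V (mat_inv X * Y * mat_inv X);
          I = Iset V j;
          m = card I;
          l = submatrix (L 0) I {j}
      in four_block_mat (1\<^sub>m 1) (transpose_mat l) (0\<^sub>m m 1) (1\<^sub>m m)
         * four_block_mat (submatrix T {j} {j}) (transpose_mat (submatrix T I {j}))
                          (submatrix T I {j}) (submatrix T I I)
         * four_block_mat (1\<^sub>m 1) (0\<^sub>m 1 m) l (1\<^sub>m m)
       = four_block_mat (mat 1 1 (\<lambda>_. D' $$ (j,j) / (D 0 $$ (j,j))^2))
                        (transpose_mat (submatrix S I I * submatrix L' I {j}))
                        (submatrix S I I * submatrix L' I {j})
                        (submatrix T I I))"
proof -
  obtain \<epsilon> where eps: "\<epsilon> > 0" and fac: "\<And>t. \<bar>t\<bar> < \<epsilon> \<Longrightarrow> unit_lower_triangular n (L t) \<and>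
      pos_diagonal n (D t) \<and> X + t \<cdot>\<^sub>m Y = L t * D t * transpose_mat (L t)"
    using fact by blast
  have L'_d: "\<And>i k. i < n \<Longrightarrow> k < n \<Longrightarrow> ((\<lambda>t. L t $$ (i,k)) has_real_derivative L' $$ (i,k)) (at 0)"
    using L'_deriv by blast
  have Xc: "X \<in> carrier_mat n n" "transpose_mat X = X" and Yc: "Y \<in> carrier_mat n n" "transpose_mat Y = Y"
    using X Y unfolding in_SV_def by auto
  have dX: "det X \<noteq> 0" using Xpd by (rule pos_def_det_nonzero)
  have Z: "adj_inv X \<in> carrier_mat n n" "transpose_mat (adj_inv X) = adj_inv X"
    using adj_inv_carrier[OF Xc(1)] adj_inv_symmetric[OF Xc(1) dX Xc(2)] by auto
  have fac0: "unit_lower_triangular n (L 0)" "pos_diagonal n (D 0)" "X = L 0 * D 0 * transpose_mat (L 0)"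
    using fac[of 0] eps affine_at_zero[OF Xc(1) Yc(1)] by auto
  have L0: "L 0 \<in> carrier_mat n n" "L 0 $$ (j,j) = 1" using fac0(1) j unfolding unit_lower_triangular_def by auto
  have supp': "L' $$ (k,j) = 0" if "k < n" "k \<notin> Iset V j" for k
    using ldl_deriv_column_support[OF V filled X Y eps fac L'_d[OF that(1) j] j that] .
  note relations = ldl_path_relations[OF V Xc(1) Yc(1) dX eps fac L'_carr L'_d D'_deriv[rule_format, OF j j] j]
  show ?thesis
    unfolding Let_def mat_inv_eq_adj_inv[OF Xc(1) dX]
    by (rule projected_block_identity[OF V filled j Z mult_carrier_mat[OF mult_carrier_mat[OF Z(1) Yc(1)] Z(1)]
          congruence_symmetric[OF Z Yc] L0(1) L'_carr ldl_column_support[OF V filled fac0(1,2) X fac0(3) j]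
          supp' L0(2) relations])
qed

end
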